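(* Let $f_i$ and $f_j$ be Poisson finite set densities on finite subsets of $\mathbb{R}^d$ with parameters (expected numbers of objects) $\lambda_i,\lambda_j>0$ and localisation densities $\rho_i,\rho_j$ on $\mathbb{R}^d$, and let $\omega\in[0,1]$. Let $z_\omega=\int_{\mathbb{R}^d}\rho_i^{(1-\omega)}(x)\rho_j^{\omega}(x)\,\mathrm{d}x$ and let $\lambda_\omega=\lambda_i^{(1-\omega)}\lambda_j^{\omega}z_\omega$ be the expected number of objects of their exponential mixture density with weight $\omega$. Then $$\lambda_\omega<\min\{\lambda_i,\lambda_j\}$$ holds whenever $$z_\omega<\frac{\min\{\lambda_i,\lambda_j\}}{\max\{\lambda_i,\lambda_j\}}.$$
   Context: A Poisson finite set density with parameter $\lambda>0$ and localisation (probability) density $\rho$ on $\mathbb{R}^d$ has Poisson cardinality distribution with mean $\lambda$ and, given cardinality $n$, localisation density $\rho_n(x_1,\ldots,x_n)=\prod_{k=1}^n\rho(x_k)$. The exponential mixture density with weight $\omega$ is $f_\omega\propto f_i^{1-\omega}f_j^{\omega}$, normalised with respect to the set integral; it is Poisson with parameter $\lambda_\omega$ as in the claim. *)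

theory Defs
  imports "HOL-Analysis.Analysis"
begin

text \<open>Real power of a nonnegative base with the convention b^0 = 1 (also for b = 0),
  as needed for the integrand rho_i^(1-omega) rho_j^omega at omega in {0,1}.
  (Isabelle's powr has 0 powr 0 = 0.)\<close>
definition rpow :: "real \<Rightarrow> real \<Rightarrow> real" where
  "rpow b e = (if e = 0 then 1 else b powr e)"

definition is_density :: "('a::euclidean_space \<Rightarrow> real) \<Rightarrow> bool" where
  "is_density \<rho> \<longleftrightarrow> \<rho> \<in> borel_measurable lborel \<and> (\<forall>x. 0 \<le> \<rho> x)
     \<and> integrable lborel \<rho> \<and> (LINT x|lborel. \<rho> x) = 1"

definition z_mix :: "('a::euclidean_space \<Rightarrow> real) \<Rightarrow> ('a \<Rightarrow> real) \<Rightarrow> real \<Rightarrow> real" where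
  "z_mix \<rho>i \<rho>j \<omega> = (LINT x|lborel. rpow (\<rho>i x) (1 - \<omega>) * rpow (\<rho>j x) \<omega>)"

definition lambda_mix :: "real \<Rightarrow> real \<Rightarrow> ('a::euclidean_space \<Rightarrow> real) \<Rightarrow> ('a \<Rightarrow> real) \<Rightarrow> real \<Rightarrow> real" where
  "lambda_mix li lj \<rho>i \<rho>j \<omega> = li powr (1 - \<omega>) * lj powr \<omega> * z_mix \<rho>i \<rho>j \<omega>"

end

theory Submission
  imports Defs
begin

text \<open>The weighted geometric mean \<open>\<lambda>\<^sub>i\<^sup>1\<^sup>-\<^sup>\<omega> \<lambda>\<^sub>j\<^sup>\<omega>\<close> is at most \<open>max \<lambda>\<^sub>i \<lambda>\<^sub>j\<close>, and \<open>z\<^sub>\<omega> \<ge> 0\<close>;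
  hence \<open>\<lambda>\<^sub>\<omega> \<le> max \<lambda>\<^sub>i \<lambda>\<^sub>j \<cdot> z\<^sub>\<omega> < min \<lambda>\<^sub>i \<lambda>\<^sub>j\<close> under the hypothesis on \<open>z\<^sub>\<omega>\<close>.\<close>

lemma powr_weighted_le_max:
  fixes a b w :: real
  assumes "0 \<le> a" and "0 \<le> b" and "0 \<le> w" and "w \<le> 1"
  shows "a powr (1 - w) * b powr w \<le> max a b"
proof -
  have "a powr (1 - w) * b powr w \<le> max a b powr (1 - w) * max a b powr w"
    using assms by (intro mult_mono powr_mono2) auto
  also have "\<dots> = max a b"
    using assms by (simp add: powr_add[symmetric])
  finally show ?thesis .
qed

lemma rpow_nonneg: "0 \<le> rpow b e"
  by (simp add: rpow_def)

lemma z_mix_nonneg: "0 \<le> z_mix \<rho>i \<rho>j \<omega>"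
  unfolding z_mix_def by (intro integral_nonneg_AE) (simp add: rpow_nonneg)

theorem proposition2:
  fixes \<rho>i \<rho>j :: "'a::euclidean_space \<Rightarrow> real" and li lj \<omega> :: real
  assumes "li > 0" and "lj > 0"
    and "is_density \<rho>i" and "is_density \<rho>j"
    and "0 \<le> \<omega>" and "\<omega> \<le> 1"
    and "z_mix \<rho>i \<rho>j \<omega> < min li lj / max li lj"
  shows "lambda_mix li lj \<rho>i \<rho>j \<omega> < min li lj"
proof -
  let ?z = "z_mix \<rho>i \<rho>j \<omega>"
  have "lambda_mix li lj \<rho>i \<rho>j \<omega> \<le> max li lj * ?z"
    unfolding lambda_mix_def
    using assms(1,2,5,6) by (intro mult_right_mono z_mix_nonneg powr_weighted_le_max) auto
  also have "\<dots> < min li lj"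
    using assms(1,2,7) by (simp add: pos_less_divide_eq mult.commute)
  finally show ?thesis .
qed

end
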